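(* Let $\Omega\subset\mathbb{R}^2$ be open, $\lambda>0$, and let $u\in L^2(\Omega)$ satisfy $-\Delta u=\lambda u$ in $\Omega$. Let $\mathbf{x}_0\in\Omega$, $h>0$, $\alpha\in(0,1)$, and let $\mathbf{e}^-,\mathbf{e}^+$ be unit vectors with angle $\alpha\pi$ from $\mathbf{e}^-$ to $\mathbf{e}^+$; put $\Gamma^\pm=\{\mathbf{x}_0+t\mathbf{e}^\pm:0\le t\le h\}\subset\Omega$. Suppose $\Gamma^+$ is a singular line of $u$ ($\partial_\nu u=0$ on $\Gamma^+$, $\nu$ a unit normal to $\Gamma^+$) and $\Gamma^-$ is a nodal line of $u$ ($u=0$ on $\Gamma^-$). Let $n\in\mathbb{N}$, $n\ge2$. If $\alpha\neq\frac{2q+1}{2p}$ for all integers $p,q$ with $1\le p\le n-1$ and $0\le q\le p-1$, then $u$ vanishes up to the order $n$ at $\mathbf{x}_0$, i.e. all partial derivatives of $u$ of order at most $n-1$ vanish at $\mathbf{x}_0$.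
   Context: No boundary condition is imposed on $\partial\Omega$; $u$ is real-analytic in $\Omega$. "Vanishes up to order $n$" means every homogeneous term of degree $<n$ in the Taylor expansion of $u$ at $\mathbf{x}_0$ vanishes. *)

theory Defs
  imports "HOL-Analysis.Analysis"
begin

text \<open>Functions on the plane are modelled as functions on real \<times> real.
  First-order partial derivatives: False = d/dx, True = d/dy.\<close>

definition partial :: "bool \<Rightarrow> (real \<times> real \<Rightarrow> real) \<Rightarrow> (real \<times> real \<Rightarrow> real)" where
  "partial d f = (\<lambda>(x, y).
     if d then deriv (\<lambda>t. f (x, t)) y else deriv (\<lambda>t. f (t, y)) x)"

definition iter_partial :: "bool list \<Rightarrow> (real \<times> real \<Rightarrow> real) \<Rightarrow> (real \<times> real \<Rightarrow> real)" where
  "iter_partial ds f = foldr partial ds f"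

definition smooth_on :: "(real \<times> real) set \<Rightarrow> (real \<times> real \<Rightarrow> real) \<Rightarrow> bool" where
  "smooth_on S f \<longleftrightarrow> (\<forall>ds. \<forall>p\<in>S. iter_partial ds f differentiable (at p))"

definition real_analytic_on :: "(real \<times> real) set \<Rightarrow> (real \<times> real \<Rightarrow> real) \<Rightarrow> bool" where
  "real_analytic_on S f \<longleftrightarrow> (\<forall>p\<in>S. \<exists>r>0. \<exists>c :: nat \<Rightarrow> nat \<Rightarrow> real.
     \<forall>z\<in>ball p r.
       (\<lambda>ij. norm (c (fst ij) (snd ij) * (fst z - fst p) ^ fst ij * (snd z - snd p) ^ snd ij))
         summable_on (UNIV :: (nat \<times> nat) set) \<and>
       f z = infsum (\<lambda>ij. c (fst ij) (snd ij) * (fst z - fst p) ^ fst ij * (snd z - snd p) ^ snd ij)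
               (UNIV :: (nat \<times> nat) set))"

definition laplacian :: "(real \<times> real \<Rightarrow> real) \<Rightarrow> (real \<times> real \<Rightarrow> real)" where
  "laplacian f = (\<lambda>p. partial False (partial False f) p + partial True (partial True f) p)"

definition dir :: "real \<Rightarrow> real \<times> real" where
  "dir \<theta> = (cos \<theta>, sin \<theta>)"

definition segment_from :: "real \<times> real \<Rightarrow> real \<times> real \<Rightarrow> real \<Rightarrow> (real \<times> real) set" where
  "segment_from x0 e h = {x0 + t *\<^sub>R e | t. 0 \<le> t \<and> t \<le> h}"

definition normal_deriv :: "(real \<times> real \<Rightarrow> real) \<Rightarrow> real \<times> real \<Rightarrow> real \<times> real \<Rightarrow> real" where
  "normal_deriv f \<nu> p = fst \<nu> * partial False f p + snd \<nu> * partial True f p"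

end

theory Submission
  imports Defs
begin

text \<open>Induction on the order \<open>k\<close>. Once all derivatives of order \<open>k - 2\<close> vanish at \<open>x\<^sub>0\<close>, the
  Helmholtz equation gives \<open>\<partial>\<^sub>y^(j+2) \<partial>\<^sub>x^(k-j-2) u = - \<partial>\<^sub>y^j \<partial>\<^sub>x^(k-j) u\<close> at \<open>x\<^sub>0\<close>, so the
  order-\<open>k\<close> derivatives are \<open>Re (\<zeta> \<i>^j)\<close> for one complex number \<open>\<zeta>\<close>, and the \<open>k\<close>-th
  derivative in direction \<open>cis t\<close> is \<open>Re (\<zeta> cis (k t))\<close>. Differentiating along the nodal line
  (angle \<open>\<theta>\<close>) gives \<open>Re (\<zeta> cis (k \<theta>)) = 0\<close>, along the singular line (angle \<open>\<theta> + \<alpha> \<pi>\<close>)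
  gives \<open>Im (\<zeta> cis (k (\<theta> + \<alpha> \<pi>))) = 0\<close>; hence \<open>\<zeta> = 0\<close> unless \<open>cos (k \<alpha> \<pi>) = 0\<close>, which is
  excluded for \<open>k < n\<close>.\<close>

lemma linear_on_pairs:
  fixes f' :: "real \<times> real \<Rightarrow> real"
  assumes "linear f'"
  shows "f' v = fst v * f' (1, 0) + snd v * f' (0, 1)"
proof -
  have "v = fst v *\<^sub>R (1, 0) + snd v *\<^sub>R (0, 1)" by (cases v) simp
  then have "f' v = f' (fst v *\<^sub>R (1, 0) + snd v *\<^sub>R (0, 1))" by simp
  also have "\<dots> = fst v * f' (1, 0) + snd v * f' (0, 1)"
    unfolding linear_add[OF assms] linear_scale[OF assms] by simp
  finally show ?thesis .
qed

lemma has_derivative_slices: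
  assumes "(f has_derivative (\<lambda>v. fst v * P + snd v * Q)) (at (s, t))"
  shows "((\<lambda>x. f (x, t)) has_real_derivative P) (at s)"
    and "((\<lambda>y. f (s, y)) has_real_derivative Q) (at t)"
proof -
  have "((\<lambda>x. (x, t)) has_derivative (\<lambda>r. (r, 0))) (at s)"
    by (auto intro!: derivative_eq_intros)
  from has_derivative_compose[OF this assms]
  show "((\<lambda>x. f (x, t)) has_real_derivative P) (at s)"
    by (simp add: has_field_derivative_def o_def mult_commute_abs)
  have "((\<lambda>y. (s, y)) has_derivative (\<lambda>r. (0, r))) (at t)"
    by (auto intro!: derivative_eq_intros)
  from has_derivative_compose[OF this assms]
  show "((\<lambda>y. f (s, y)) has_real_derivative Q) (at t)"
    by (simp add: has_field_derivative_def o_def mult_commute_abs)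
qed

lemma partials_of_has_derivative:
  assumes "(f has_derivative (\<lambda>v. fst v * P + snd v * Q)) (at p)"
  shows "partial False f p = P" and "partial True f p = Q"
  using has_derivative_slices[of f P Q "fst p" "snd p"] assms
  by (auto simp: partial_def DERIV_imp_deriv split: prod.splits)

lemma has_derivative_partials:
  assumes "f differentiable (at p)"
  shows "(f has_derivative (\<lambda>v. fst v * partial False f p + snd v * partial True f p)) (at p)"
proof -
  obtain f' where f': "(f has_derivative f') (at p)"
    using assms differentiable_def by blast
  moreover have f'_eq: "f' = (\<lambda>v. fst v * f' (1, 0) + snd v * f' (0, 1))"
    using linear_on_pairs has_derivative_linear[OF f'] by blast
  ultimately show ?thesis
    using partials_of_has_derivative[of f "f' (1, 0)" "f' (0, 1)" p] by simp
qed

lemma partial_cong_open: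
  assumes "open S" "p \<in> S" "\<And>x. x \<in> S \<Longrightarrow> f x = g x"
  shows "partial d f p = partial d g p"
proof -
  obtain a b where p: "p = (a, b)" by (cases p)
  have "open {t. (t, b) \<in> S}"
    by (rule open_vimage[OF assms(1), of "\<lambda>t. (t, b)", simplified vimage_def])
      (auto intro!: continuous_intros)
  moreover have "open {t. (a, t) \<in> S}"
    by (rule open_vimage[OF assms(1), of "\<lambda>t. (a, t)", simplified vimage_def])
      (auto intro!: continuous_intros)
  ultimately have x_slice: "eventually (\<lambda>t. f (t, b) = g (t, b)) (nhds a)"
    and y_slice: "eventually (\<lambda>t. f (a, t) = g (a, t)) (nhds b)"
    using assms p unfolding eventually_nhds by blast+
  show ?thesis
    unfolding partial_def p using deriv_cong_ev[OF x_slice refl] deriv_cong_ev[OF y_slice refl]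
    by simp
qed

lemma iter_partial_Nil [simp]: "iter_partial [] f = f"
  by (simp add: iter_partial_def)

lemma iter_partial_Cons [simp]: "iter_partial (d # ds) f = partial d (iter_partial ds f)"
  by (simp add: iter_partial_def)

lemma iter_partial_append: "iter_partial (ds @ es) f = iter_partial ds (iter_partial es f)"
  by (simp add: iter_partial_def)

lemma iter_partial_cong_open:
  assumes "open S" "p \<in> S" "\<And>x. x \<in> S \<Longrightarrow> f x = g x"
  shows "iter_partial ds f p = iter_partial ds g p"
  using assms(2)
proof (induction ds arbitrary: p)
  case Nil
  then show ?case using assms(3) by simp
next
  case (Cons d ds)
  then show ?case by (auto intro: partial_cong_open[OF assms(1)])
qed

lemma smooth_on_iter_partial: "smooth_on S f \<Longrightarrow> smooth_on S (iter_partial ds f)"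
  unfolding smooth_on_def by (simp add: iter_partial_append[symmetric])

lemma smooth_on_differentiable: "smooth_on S f \<Longrightarrow> p \<in> S \<Longrightarrow> f differentiable (at p)"
  unfolding smooth_on_def by (metis iter_partial_Nil)

lemma partial_lincomb:
  assumes "f differentiable (at p)" "g differentiable (at p)"
  shows "partial d (\<lambda>x. a * f x + b * g x) p = a * partial d f p + b * partial d g p"
proof -
  have "((\<lambda>x. a * f x + b * g x) has_derivative
      (\<lambda>v. fst v * (a * partial False f p + b * partial False g p)
         + snd v * (a * partial True f p + b * partial True g p))) (at p)"
    using has_derivative_partials[OF assms(1)] has_derivative_partials[OF assms(2)]
    by (auto intro!: derivative_eq_intros simp: algebra_simps)
  from partials_of_has_derivative[OF this] show ?thesis by (cases d) simp_all
qed

lemma iter_partial_lincomb: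
  assumes "open S" "smooth_on S f" "smooth_on S g" "p \<in> S"
  shows "iter_partial ds (\<lambda>x. a * f x + b * g x) p = a * iter_partial ds f p + b * iter_partial ds g p"
  using assms(4)
proof (induction ds arbitrary: p)
  case Nil
  then show ?case by simp
next
  case (Cons d ds)
  have "iter_partial (d # ds) (\<lambda>x. a * f x + b * g x) p
      = partial d (\<lambda>x. a * iter_partial ds f x + b * iter_partial ds g x) p"
    using Cons by (auto intro: partial_cong_open[OF assms(1)])
  also have "\<dots> = a * iter_partial (d # ds) f p + b * iter_partial (d # ds) g p"
    using assms(2,3) Cons.prems
    by (simp add: partial_lincomb smooth_on_differentiable[OF smooth_on_iter_partial])
  finally show ?case .
qed

lemma smooth_on_lincomb:
  assumes "open S" "smooth_on S f" "smooth_on S g"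
  shows "smooth_on S (\<lambda>x. a * f x + b * g x)"
  unfolding smooth_on_def
proof (intro allI ballI)
  fix ds p assume "p \<in> S"
  have "(\<lambda>x. a * iter_partial ds f x + b * iter_partial ds g x) differentiable (at p)"
    using assms \<open>p \<in> S\<close> unfolding smooth_on_def by (intro derivative_intros) auto
  then show "iter_partial ds (\<lambda>x. a * f x + b * g x) differentiable (at p)"
    unfolding differentiable_def
    using has_derivative_transform_within_open[OF _ assms(1) \<open>p \<in> S\<close>]
      iter_partial_lincomb[OF assms, symmetric] by blast
qed

lemma partials_linear_approximation:
  assumes "F differentiable (at (a, b))"
  shows "\<forall>e>0. \<exists>d>0. \<forall>s t. \<bar>s - a\<bar> < d \<and> \<bar>t - b\<bar> < d \<longrightarrow>
     \<bar>F (s, t) - F (a, b) - (partial False F (a, b) * (s - a) + partial True F (a, b) * (t - b))\<bar>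
       \<le> e * (\<bar>s - a\<bar> + \<bar>t - b\<bar>)"
proof (intro allI impI)
  fix e :: real assume "e > 0"
  with has_derivative_partials[OF assms] obtain d where "d > 0" and approx:
    "\<forall>y. norm (y - (a, b)) < d \<longrightarrow> norm (F y - F (a, b)
       - (fst (y - (a, b)) * partial False F (a, b) + snd (y - (a, b)) * partial True F (a, b)))
       \<le> e * norm (y - (a, b))"
    unfolding has_derivative_at_alt by blast
  show "\<exists>d>0. \<forall>s t. \<bar>s - a\<bar> < d \<and> \<bar>t - b\<bar> < d \<longrightarrow>
     \<bar>F (s, t) - F (a, b) - (partial False F (a, b) * (s - a) + partial True F (a, b) * (t - b))\<bar>
       \<le> e * (\<bar>s - a\<bar> + \<bar>t - b\<bar>)"
  proof (intro exI[of _ "d / 2"] conjI allI impI)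
    fix s t assume st: "\<bar>s - a\<bar> < d / 2 \<and> \<bar>t - b\<bar> < d / 2"
    have norm_le: "norm ((s, t) - (a, b)) \<le> \<bar>s - a\<bar> + \<bar>t - b\<bar>"
      using norm_Pair_le[of "s - a" "t - b"] by simp
    with st approx have "\<bar>F (s, t) - F (a, b) - (partial False F (a, b) * (s - a) + partial True F (a, b) * (t - b))\<bar>
        \<le> e * norm ((s, t) - (a, b))"
      by (auto simp: mult.commute)
    also have "\<dots> \<le> e * (\<bar>s - a\<bar> + \<bar>t - b\<bar>)"
      using norm_le \<open>e > 0\<close> by simp
    finally show "\<bar>F (s, t) - F (a, b) - (partial False F (a, b) * (s - a) + partial True F (a, b) * (t - b))\<bar>
        \<le> e * (\<bar>s - a\<bar> + \<bar>t - b\<bar>)" .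
  qed (use \<open>d > 0\<close> in simp)
qed

lemma second_difference_bound:
  fixes g gx :: "real \<Rightarrow> real \<Rightarrow> real"
  assumes slope: "\<And>s t. \<bar>s - a\<bar> \<le> h \<Longrightarrow> \<bar>t - b\<bar> \<le> h \<Longrightarrow>
      ((\<lambda>x. g x t) has_real_derivative gx s t) (at s)"
    and approx: "\<forall>s t. \<bar>s - a\<bar> < d \<and> \<bar>t - b\<bar> < d \<longrightarrow>
      \<bar>gx s t - gx a b - (C * (s - a) + A * (t - b))\<bar> \<le> e * (\<bar>s - a\<bar> + \<bar>t - b\<bar>)"
    and "0 < h" "h < d" "0 \<le> e"
  shows "\<bar>g (a + h) (b + h) - g (a + h) b - g a (b + h) + g a b - A * h\<^sup>2\<bar> \<le> 3 * e * h\<^sup>2"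
proof -
  define \<phi> where "\<phi> x = g x (b + h) - g x b" for x
  have "DERIV \<phi> x :> gx x (b + h) - gx x b" if "a \<le> x" "x \<le> a + h" for x
    unfolding \<phi>_def using that \<open>0 < h\<close> by (intro derivative_intros slope) auto
  then obtain z where z: "a < z" "z < a + h" "\<phi> (a + h) - \<phi> a = h * (gx z (b + h) - gx z b)"
    using MVT2[of a "a + h" \<phi> "\<lambda>x. gx x (b + h) - gx x b"] \<open>0 < h\<close> by auto
  have za: "\<bar>z - a\<bar> \<le> h" "\<bar>z - a\<bar> < d"
    using z \<open>h < d\<close> by auto
  have "\<bar>gx z (b + h) - gx a b - (C * (z - a) + A * h)\<bar> \<le> e * (\<bar>z - a\<bar> + h)"
    using approx[rule_format, of z "b + h"] za \<open>0 < h\<close> \<open>h < d\<close> by simp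
  also have "\<dots> \<le> e * (h + h)"
    using za \<open>0 \<le> e\<close> by (intro mult_left_mono) auto
  finally have "\<bar>gx z (b + h) - gx a b - (C * (z - a) + A * h)\<bar> \<le> 2 * e * h"
    by simp
  moreover have "\<bar>gx z b - gx a b - C * (z - a)\<bar> \<le> e * \<bar>z - a\<bar>"
    using approx[rule_format, of z b] za \<open>0 < h\<close> \<open>h < d\<close> by simp
  moreover have "e * \<bar>z - a\<bar> \<le> e * h"
    using za \<open>0 \<le> e\<close> by (intro mult_left_mono) auto
  ultimately have "\<bar>gx z (b + h) - gx z b - A * h\<bar> \<le> 3 * e * h"
    by linarith
  moreover have "g (a + h) (b + h) - g (a + h) b - g a (b + h) + g a b - A * h\<^sup>2
      = h * (gx z (b + h) - gx z b - A * h)"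
    using z(3) unfolding \<phi>_def by (simp add: algebra_simps power2_eq_square)
  ultimately show ?thesis
    using \<open>0 < h\<close> by (simp add: abs_mult power2_eq_square mult_left_mono mult.assoc mult.left_commute)
qed

lemma second_difference_tendsto:
  fixes g gx :: "real \<Rightarrow> real \<Rightarrow> real"
  assumes slope: "\<And>s t. \<bar>s - a\<bar> < r \<Longrightarrow> \<bar>t - b\<bar> < r \<Longrightarrow>
      ((\<lambda>x. g x t) has_real_derivative gx s t) (at s)"
    and "r > 0"
    and approx: "\<forall>e>0. \<exists>d>0. \<forall>s t. \<bar>s - a\<bar> < d \<and> \<bar>t - b\<bar> < d \<longrightarrow>
      \<bar>gx s t - gx a b - (C * (s - a) + A * (t - b))\<bar> \<le> e * (\<bar>s - a\<bar> + \<bar>t - b\<bar>)"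
  shows "((\<lambda>h. (g (a + h) (b + h) - g (a + h) b - g a (b + h) + g a b) / h\<^sup>2) \<longlongrightarrow> A) (at_right 0)"
proof (rule tendstoI)
  fix e :: real assume "e > 0"
  then obtain d where "d > 0" and approx_d: "\<forall>s t. \<bar>s - a\<bar> < d \<and> \<bar>t - b\<bar> < d \<longrightarrow>
      \<bar>gx s t - gx a b - (C * (s - a) + A * (t - b))\<bar> \<le> e / 4 * (\<bar>s - a\<bar> + \<bar>t - b\<bar>)"
    using approx by (meson divide_pos_pos zero_less_numeral)
  have "dist ((g (a + h) (b + h) - g (a + h) b - g a (b + h) + g a b) / h\<^sup>2) A < e"
    if h: "0 < h" "h < min r d" for h
  proof -
    have "\<bar>g (a + h) (b + h) - g (a + h) b - g a (b + h) + g a b - A * h\<^sup>2\<bar> \<le> 3 * (e / 4) * h\<^sup>2"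
      using h \<open>e > 0\<close> by (intro second_difference_bound[OF slope approx_d]) auto
    also have "\<dots> < e * h\<^sup>2"
      using h \<open>e > 0\<close> by simp
    finally show ?thesis
      using h by (simp add: dist_real_def field_simps abs_div)
  qed
  then show "eventually (\<lambda>h. dist ((g (a + h) (b + h) - g (a + h) b - g a (b + h) + g a b) / h\<^sup>2) A < e)
      (at_right 0)"
    unfolding eventually_at_right_field using \<open>r > 0\<close> \<open>d > 0\<close>
    by (intro exI[of _ "min r d"]) auto
qed

theorem partial_commute:
  assumes "open S" "p \<in> S" "\<And>q. q \<in> S \<Longrightarrow> f differentiable (at q)"
    and "partial False f differentiable (at p)" "partial True f differentiable (at p)"
  shows "partial True (partial False f) p = partial False (partial True f) p"
proof -
  obtain a b where p: "p = (a, b)" by (cases p)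
  obtain r where "r > 0" "ball p r \<subseteq> S"
    using assms(1,2) open_contains_ball by blast
  have in_S: "(s, t) \<in> S" if "\<bar>s - a\<bar> < r / 2" "\<bar>t - b\<bar> < r / 2" for s t
  proof -
    have "dist (s, t) (a, b) \<le> \<bar>s - a\<bar> + \<bar>t - b\<bar>"
      using norm_Pair_le[of "s - a" "t - b"] by (simp add: dist_norm)
    with that \<open>ball p r \<subseteq> S\<close> show ?thesis
      unfolding p by (auto simp: dist_commute)
  qed
  let ?\<Delta> = "\<lambda>h. (f (a + h, b + h) - f (a + h, b) - f (a, b + h) + f (a, b)) / h\<^sup>2"
  have "(?\<Delta> \<longlongrightarrow> partial True (partial False f) p) (at_right 0)"
  proof (rule second_difference_tendsto[where g = "\<lambda>x y. f (x, y)" and r = "r / 2"])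
    show "((\<lambda>x. f (x, t)) has_real_derivative partial False f (s, t)) (at s)"
      if "\<bar>s - a\<bar> < r / 2" "\<bar>t - b\<bar> < r / 2" for s t
      using has_derivative_slices(1)[OF has_derivative_partials[OF assms(3)[OF in_S[OF that]]]] .
    show "\<forall>e>0. \<exists>d>0. \<forall>s t. \<bar>s - a\<bar> < d \<and> \<bar>t - b\<bar> < d \<longrightarrow>
        \<bar>partial False f (s, t) - partial False f (a, b) - (partial False (partial False f) p * (s - a)
          + partial True (partial False f) p * (t - b))\<bar> \<le> e * (\<bar>s - a\<bar> + \<bar>t - b\<bar>)"
      using partials_linear_approximation[of "partial False f" a b] assms(4) p by simp
  qed (use \<open>r > 0\<close> in simp)
  moreover have "(?\<Delta> \<longlongrightarrow> partial False (partial True f) p) (at_right 0)"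
  proof -
    have "((\<lambda>h. (f (a + h, b + h) - f (a, b + h) - f (a + h, b) + f (a, b)) / h\<^sup>2)
        \<longlongrightarrow> partial False (partial True f) p) (at_right 0)"
    proof (rule second_difference_tendsto[where g = "\<lambda>y x. f (x, y)" and r = "r / 2"])
      show "((\<lambda>y. f (s, y)) has_real_derivative partial True f (s, t)) (at t)"
        if "\<bar>t - b\<bar> < r / 2" "\<bar>s - a\<bar> < r / 2" for t s
        using has_derivative_slices(2)[OF has_derivative_partials[OF assms(3)[OF in_S[OF that(2,1)]]]] .
      show "\<forall>e>0. \<exists>d>0. \<forall>t s. \<bar>t - b\<bar> < d \<and> \<bar>s - a\<bar> < d \<longrightarrow>
          \<bar>partial True f (s, t) - partial True f (a, b) - (partial True (partial True f) p * (t - b)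
            + partial False (partial True f) p * (s - a))\<bar> \<le> e * (\<bar>t - b\<bar> + \<bar>s - a\<bar>)"
        using partials_linear_approximation[of "partial True f" a b] assms(5) p
        by (metis (no_types, lifting) add.commute)
    qed (use \<open>r > 0\<close> in simp)
    then show ?thesis
      by (simp add: algebra_simps)
  qed
  ultimately show ?thesis
    using tendsto_unique[OF trivial_limit_at_right_real] by blast
qed

lemma partial_False_iter_partial_commute:
  assumes "open S" "smooth_on S f" "p \<in> S"
  shows "partial False (iter_partial (replicate j True @ ds) f) p
      = iter_partial (replicate j True @ False # ds) f p"
  using assms(3)
proof (induction j arbitrary: p)
  case 0
  then show ?case by simp
next
  case (Suc j)
  let ?G = "iter_partial (replicate j True @ ds) f"
  have "partial False (partial True ?G) p = partial True (partial False ?G) p"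
  proof (rule partial_commute[symmetric, OF assms(1) Suc.prems])
    show "?G differentiable (at q)" if "q \<in> S" for q
      using smooth_on_differentiable[OF smooth_on_iter_partial[OF assms(2)] that] .
    show "partial False ?G differentiable (at p)" "partial True ?G differentiable (at p)"
      using smooth_on_differentiable[OF smooth_on_iter_partial[OF assms(2)] Suc.prems,
          of "_ # replicate j True @ ds"] by simp_all
  qed
  also have "\<dots> = partial True (iter_partial (replicate j True @ False # ds) f) p"
    using Suc.IH by (auto intro: partial_cong_open[OF assms(1) Suc.prems])
  finally show ?case by simp
qed

lemma iter_partial_sorted:
  assumes "open S" "smooth_on S f" "p \<in> S"
  shows "iter_partial ds f p
      = iter_partial (replicate (count_list ds True) True @ replicate (count_list ds False) False) f p"
  using assms(3)
proof (induction ds arbitrary: p)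
  case Nil
  then show ?case by simp
next
  case (Cons d ds)
  let ?sorted = "\<lambda>ds. replicate (count_list ds True) True @ replicate (count_list ds False) False"
  have "iter_partial (d # ds) f p = partial d (iter_partial (?sorted ds) f) p"
    using Cons by (auto intro: partial_cong_open[OF assms(1)])
  also have "\<dots> = iter_partial (?sorted (d # ds)) f p"
    using partial_False_iter_partial_commute[OF assms(1,2) Cons.prems] by (cases d) simp_all
  finally show ?case .
qed

lemma count_list_replicate [simp]: "count_list (replicate n x) y = (if x = y then n else 0)"
  by (induction n) auto

lemma count_list_True_False: "count_list ds True + count_list ds False = length ds"
  by (induction ds) auto

text \<open>\<open>dir_form c s m (\<lambda>ds. iter_partial ds f p)\<close> is \<open>(c \<partial>\<^sub>x + s \<partial>\<^sub>y)\<^sup>m f (p)\<close>, the \<open>m\<close>-th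
  derivative of \<open>f\<close> along the direction \<open>(c, s)\<close>, with the partial derivatives left unsorted.\<close>

fun dir_form :: "real \<Rightarrow> real \<Rightarrow> nat \<Rightarrow> (bool list \<Rightarrow> real) \<Rightarrow> real" where
  "dir_form c s 0 g = g []"
| "dir_form c s (Suc m) g = dir_form c s m (\<lambda>ds. c * g (False # ds) + s * g (True # ds))"

lemma dir_form_cong:
  "(\<And>ds. length ds = m \<Longrightarrow> g ds = g' ds) \<Longrightarrow> dir_form c s m g = dir_form c s m g'"
proof (induction m arbitrary: g g')
  case 0
  then show ?case by simp
next
  case (Suc m)
  show ?case
    by simp (rule Suc.IH, simp add: Suc.prems)
qed

lemma dir_form_has_real_derivative:
  assumes "\<And>ds. length ds = m \<Longrightarrow> ((\<lambda>t. g ds t) has_real_derivative g' ds) (at t0)"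
  shows "((\<lambda>t. dir_form c s m (\<lambda>ds. g ds t)) has_real_derivative dir_form c s m g') (at t0)"
  using assms
proof (induction m arbitrary: g g')
  case 0
  then show ?case by simp
next
  case (Suc m)
  have "((\<lambda>t. dir_form c s m (\<lambda>ds. c * g (False # ds) t + s * g (True # ds) t)) has_real_derivative
      dir_form c s m (\<lambda>ds. c * g' (False # ds) + s * g' (True # ds))) (at t0)"
    using Suc.prems by (intro Suc.IH DERIV_add DERIV_cmult) auto
  then show ?case by simp
qed

lemma dir_form_powers_of_i:
  "dir_form c s m (\<lambda>ds. Re (z * \<i> ^ count_list ds True)) = Re (z * Complex c s ^ m)"
proof (induction m arbitrary: z)
  case 0
  then show ?case by simp
next
  case (Suc m)
  have "dir_form c s (Suc m) (\<lambda>ds. Re (z * \<i> ^ count_list ds True))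
      = dir_form c s m (\<lambda>ds. Re ((z * Complex c s) * \<i> ^ count_list ds True))"
    by (simp, rule dir_form_cong) (simp add: algebra_simps)
  also have "\<dots> = Re (z * Complex c s ^ Suc m)"
    unfolding Suc.IH by (simp add: mult.assoc)
  finally show ?case .
qed

lemma iter_partial_has_real_derivative_along_line:
  assumes "smooth_on S f" "x0 + t0 *\<^sub>R (c, s) \<in> S"
  shows "((\<lambda>t. iter_partial ds f (x0 + t *\<^sub>R (c, s))) has_real_derivative
      c * iter_partial (False # ds) f (x0 + t0 *\<^sub>R (c, s))
      + s * iter_partial (True # ds) f (x0 + t0 *\<^sub>R (c, s))) (at t0)"
proof -
  have "((\<lambda>t. x0 + t *\<^sub>R (c, s)) has_derivative (\<lambda>r. r *\<^sub>R (c, s))) (at t0)"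
    by (auto intro!: derivative_eq_intros)
  from has_derivative_compose[OF this has_derivative_partials[OF
        smooth_on_differentiable[OF smooth_on_iter_partial[OF assms(1)] assms(2)]]]
  have "((\<lambda>t. iter_partial ds f (x0 + t *\<^sub>R (c, s))) has_derivative (\<lambda>r. r *
      (c * iter_partial (False # ds) f (x0 + t0 *\<^sub>R (c, s))
      + s * iter_partial (True # ds) f (x0 + t0 *\<^sub>R (c, s))))) (at t0)"
    by (rule has_derivative_eq_rhs) (auto simp: o_def fun_eq_iff algebra_simps)
  then show ?thesis
    by (simp add: has_field_derivative_def mult_commute_abs)
qed

lemma dir_form_eq_0_of_vanishing_on_segment:
  assumes "open S" "smooth_on S f" "h > 0"
    and "segment_from x0 (c, s) h \<subseteq> S" "\<forall>p\<in>segment_from x0 (c, s) h. f p = 0"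
  shows "dir_form c s m (\<lambda>ds. iter_partial ds f x0) = 0"
proof -
  define F where "F m = (\<lambda>t. dir_form c s m (\<lambda>ds. iter_partial ds f (x0 + t *\<^sub>R (c, s))))" for m
  have on_segment: "x0 + t *\<^sub>R (c, s) \<in> segment_from x0 (c, s) h" if "0 \<le> t" "t \<le> h" for t
    using that unfolding segment_from_def by blast
  have F_deriv: "(F m has_real_derivative F (Suc m) t) (at t)" if "0 \<le> t" "t \<le> h" for m t
  proof -
    have "((\<lambda>t. dir_form c s m (\<lambda>ds. iter_partial ds f (x0 + t *\<^sub>R (c, s)))) has_real_derivative
        dir_form c s m (\<lambda>ds. c * iter_partial (False # ds) f (x0 + t *\<^sub>R (c, s))
          + s * iter_partial (True # ds) f (x0 + t *\<^sub>R (c, s)))) (at t)"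
      using on_segment[OF that] assms(4)
      by (intro dir_form_has_real_derivative iter_partial_has_real_derivative_along_line[OF assms(2)])
        auto
    then show ?thesis
      by (simp add: F_def)
  qed
  have F_zero: "F m t = 0" if "0 < t" "t < h" for m t
    using that
  proof (induction m arbitrary: t)
    case 0
    then show ?case using assms(5) on_segment by (simp add: F_def)
  next
    case (Suc m)
    have locally_zero: "eventually (\<lambda>x. F m x = 0) (nhds t)"
      unfolding eventually_nhds using Suc by (intro exI[of _ "{0<..<h}"]) auto
    have "((\<lambda>_. 0) has_real_derivative F (Suc m) t) (at t)"
      using DERIV_cong_ev[OF refl locally_zero refl] F_deriv[of t m] Suc.prems by simp
    then show ?case
      using DERIV_const DERIV_unique by blast
  qed
  have "(F m \<longlongrightarrow> F m 0) (at_right 0)"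
    using DERIV_isCont[OF F_deriv[of 0 m]] assms(3) by (simp add: isCont_def filterlim_at_split)
  moreover have "eventually (\<lambda>t. F m t = 0) (at_right 0)"
    unfolding eventually_at_right_field using assms(3) F_zero by (intro exI[of _ h]) auto
  then have "(F m \<longlongrightarrow> 0) (at_right 0)"
    by (rule tendsto_eventually)
  ultimately have "F m 0 = 0"
    using tendsto_unique[OF trivial_limit_at_right_real] by blast
  then show ?thesis
    by (simp add: F_def flip: zero_prod_def)
qed

lemma iter_partial_helmholtz:
  assumes "open S" "smooth_on S u" "\<forall>p\<in>S. - laplacian u p = lam * u p" "p \<in> S"
  shows "iter_partial (ds @ [False, False]) u p + iter_partial (ds @ [True, True]) u p
      = - lam * iter_partial ds u p"
proof -
  have "iter_partial (ds @ [False, False]) u p + iter_partial (ds @ [True, True]) u p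
      = iter_partial ds (laplacian u) p"
    using iter_partial_lincomb[OF assms(1) smooth_on_iter_partial[OF assms(2)]
        smooth_on_iter_partial[OF assms(2)] assms(4), of ds 1 "[False, False]" 1 "[True, True]"]
    by (simp add: iter_partial_append laplacian_def)
  also have "\<dots> = iter_partial ds (\<lambda>x. - lam * u x + 0 * u x) p"
    using assms(3) by (intro iter_partial_cong_open[OF assms(1,4)]) auto
  also have "\<dots> = - lam * iter_partial ds u p"
    using iter_partial_lincomb[OF assms(1,2,2,4), of ds "- lam" 0] by simp
  finally show ?thesis .
qed

lemma helmholtz_top_order_derivatives:
  assumes "open S" "smooth_on S u" "\<forall>p\<in>S. - laplacian u p = lam * u p" "p \<in> S"
    and lower: "\<And>ds. length ds + 2 = k \<Longrightarrow> iter_partial ds u p = 0"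
  obtains \<zeta> where "\<And>ds. length ds = k \<Longrightarrow> iter_partial ds u p = Re (\<zeta> * \<i> ^ count_list ds True)"
proof -
  define a where "a j = iter_partial (replicate j True @ replicate (k - j) False) u p" for j
  have a_sorted: "iter_partial ds u p = a (count_list ds True)" if "length ds = k" for ds
  proof -
    have "count_list ds False = k - count_list ds True"
      using count_list_True_False[of ds] that by simp
    then show ?thesis
      by (subst iter_partial_sorted[OF assms(1,2,4)]) (simp add: a_def)
  qed
  have a_rec: "a (j + 2) = - a j" if "j + 2 \<le> k" for j
  proof -
    define ds where "ds = replicate j True @ replicate (k - 2 - j) False"
    have "length ds + 2 = k"
      using that by (simp add: ds_def)
    then have "iter_partial (ds @ [False, False]) u p + iter_partial (ds @ [True, True]) u p = 0"
      using iter_partial_helmholtz[OF assms(1-4), of ds] lower by simp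
    moreover have "iter_partial (ds @ [False, False]) u p = a j"
      and "iter_partial (ds @ [True, True]) u p = a (j + 2)"
      using a_sorted[of "ds @ [False, False]"] a_sorted[of "ds @ [True, True]"] \<open>length ds + 2 = k\<close>
      by (simp_all add: ds_def count_list_append)
    ultimately show ?thesis by simp
  qed
  define \<zeta> where "\<zeta> = Complex (a 0) (- a 1)"
  have a_eq: "a j = Re (\<zeta> * \<i> ^ j)" if "j \<le> k" for j
    using that
  proof (induction j rule: less_induct)
    case (less j)
    show ?case
    proof (cases "j \<ge> 2")
      case True
      define i where "i = j - 2"
      have j: "j = i + 2"
        using True by (simp add: i_def)
      have "a j = - a i"
        using a_rec[of i] less.prems j by simp
      also have "\<dots> = - Re (\<zeta> * \<i> ^ i)"
        using less.IH[of i] less.prems j by simp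
      also have "\<dots> = Re (\<zeta> * \<i> ^ j)"
        by (simp add: j power_add)
      finally show ?thesis .
    next
      case False
      then have "j = 0 \<or> j = 1" by auto
      then show ?thesis by (auto simp: \<zeta>_def)
    qed
  qed
  show ?thesis
  proof (rule that)
    fix ds :: "bool list" assume "length ds = k"
    moreover from this have "count_list ds True \<le> k"
      using count_le_length[of ds True] by simp
    ultimately show "iter_partial ds u p = Re (\<zeta> * \<i> ^ count_list ds True)"
      by (simp add: a_sorted a_eq)
  qed
qed

lemma normal_deriv_eq_lincomb:
  "normal_deriv f \<nu> = (\<lambda>x. fst \<nu> * iter_partial [False] f x + snd \<nu> * iter_partial [True] f x)"
  by (simp add: fun_eq_iff normal_deriv_def)

lemma smooth_on_normal_deriv: "open S \<Longrightarrow> smooth_on S f \<Longrightarrow> smooth_on S (normal_deriv f \<nu>)"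
  unfolding normal_deriv_eq_lincomb by (intro smooth_on_lincomb smooth_on_iter_partial)

lemma iter_partial_normal_deriv:
  assumes "open S" "smooth_on S f" "p \<in> S"
  shows "iter_partial ds (normal_deriv f \<nu>) p
      = fst \<nu> * iter_partial (ds @ [False]) f p + snd \<nu> * iter_partial (ds @ [True]) f p"
  unfolding normal_deriv_eq_lincomb
  using iter_partial_lincomb[OF assms(1) smooth_on_iter_partial[OF assms(2)]
      smooth_on_iter_partial[OF assms(2)] assms(3), of ds "fst \<nu>" "[False]" "snd \<nu>" "[True]"]
  by (simp add: iter_partial_append)

lemma nodal_line_top_order:
  assumes "open S" "smooth_on S u" "h > 0"
    and "segment_from x0 (dir \<theta>) h \<subseteq> S" "\<forall>p\<in>segment_from x0 (dir \<theta>) h. u p = 0"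
    and top: "\<And>ds. length ds = k \<Longrightarrow> iter_partial ds u x0 = Re (\<zeta> * \<i> ^ count_list ds True)"
  shows "Re (\<zeta> * cis (real k * \<theta>)) = 0"
proof -
  have "0 = dir_form (cos \<theta>) (sin \<theta>) k (\<lambda>ds. iter_partial ds u x0)"
    using dir_form_eq_0_of_vanishing_on_segment[OF assms(1-3)] assms(4,5)
    by (simp add: dir_def)
  also have "\<dots> = dir_form (cos \<theta>) (sin \<theta>) k (\<lambda>ds. Re (\<zeta> * \<i> ^ count_list ds True))"
    using top by (rule dir_form_cong)
  also have "\<dots> = Re (\<zeta> * cis (real k * \<theta>))"
    unfolding dir_form_powers_of_i cis.ctr[symmetric] Complex.DeMoivre ..
  finally show ?thesis ..
qed

lemma singular_line_top_order:
  assumes "open S" "smooth_on S u" "h > 0" "x0 \<in> S" "k \<ge> 1"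
    and "segment_from x0 (dir \<phi>) h \<subseteq> S"
    and "\<forall>p\<in>segment_from x0 (dir \<phi>) h. normal_deriv u (dir (\<phi> + pi / 2)) p = 0"
    and top: "\<And>ds. length ds = k \<Longrightarrow> iter_partial ds u x0 = Re (\<zeta> * \<i> ^ count_list ds True)"
  shows "Im (\<zeta> * cis (real k * \<phi>)) = 0"
proof -
  let ?w = "normal_deriv u (dir (\<phi> + pi / 2))"
  have "0 = dir_form (cos \<phi>) (sin \<phi>) (k - 1) (\<lambda>ds. iter_partial ds ?w x0)"
    using dir_form_eq_0_of_vanishing_on_segment[OF assms(1) smooth_on_normal_deriv[OF assms(1,2)]
        assms(3)] assms(6,7)
    by (simp add: dir_def)
  also have "\<dots> = dir_form (cos \<phi>) (sin \<phi>) (k - 1)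
      (\<lambda>ds. Re ((\<zeta> * \<i> * cis \<phi>) * \<i> ^ count_list ds True))"
  proof (rule dir_form_cong)
    fix ds :: "bool list" assume "length ds = k - 1"
    then have "iter_partial ds ?w x0 = - sin \<phi> * Re (\<zeta> * \<i> ^ count_list ds True)
        + cos \<phi> * Re (\<zeta> * \<i> ^ Suc (count_list ds True))"
      using iter_partial_normal_deriv[OF assms(1,2,4)] top[of "ds @ [False]"] top[of "ds @ [True]"]
        \<open>k \<ge> 1\<close>
      by (simp add: dir_def count_list_append cos_add sin_add)
    also have "\<dots> = Re ((\<zeta> * \<i> * cis \<phi>) * \<i> ^ count_list ds True)"
      by (simp add: cis.code algebra_simps)
    finally show "iter_partial ds ?w x0 = Re ((\<zeta> * \<i> * cis \<phi>) * \<i> ^ count_list ds True)" .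
  qed
  also have "\<dots> = Re (\<zeta> * \<i> * cis \<phi> ^ k)"
    unfolding dir_form_powers_of_i cis.ctr[symmetric] using \<open>k \<ge> 1\<close>
    by (simp add: mult.assoc power_eq_if)
  also have "\<dots> = - Im (\<zeta> * cis (real k * \<phi>))"
    by (simp add: Complex.DeMoivre)
  finally show ?thesis by simp
qed

lemma complex_eq_0_of_Re_Im_cis:
  assumes "Re (\<zeta> * cis a) = 0" "Im (\<zeta> * cis b) = 0" "cos (b - a) \<noteq> 0"
  shows "\<zeta> = 0"
proof -
  define y where "y = Im (\<zeta> * cis a)"
  have "\<zeta> * cis a = \<i> * of_real y"
    using assms(1) by (simp add: complex_eq_iff y_def)
  moreover have "\<zeta> * cis b = (\<zeta> * cis a) * cis (b - a)"
    by (simp add: mult.assoc cis_mult)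
  ultimately have "\<zeta> * cis b = \<i> * of_real y * cis (b - a)"
    by simp
  then have "y * cos (b - a) = 0"
    using assms(2) by (simp add: cis.code)
  then have "\<zeta> * cis a = 0"
    using assms(3) \<open>\<zeta> * cis a = \<i> * of_real y\<close> by simp
  then show ?thesis by simp
qed

lemma cos_multiple_eq_0_imp_odd_fraction:
  assumes "cos (real k * \<alpha> * pi) = 0" "0 < \<alpha>" "\<alpha> < 1"
  obtains q :: int where "1 \<le> int k" "0 \<le> q" "q \<le> int k - 1"
    "\<alpha> = (2 * of_int q + 1) / (2 * of_int (int k))"
proof -
  obtain i :: int where "odd i" and i: "real k * \<alpha> * pi = of_int i * (pi / 2)"
    using assms(1) cos_zero_iff_int by blast
  then obtain q where q: "i = 2 * q + 1"
    by (metis oddE)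
  have "k \<noteq> 0"
  proof
    assume "k = 0"
    with assms(1) show False by simp
  qed
  then have \<alpha>: "\<alpha> = of_int i / (2 * real k)"
    using i by (simp add: field_simps)
  then have "0 < i" "i < 2 * int k"
    using assms(2,3) \<open>k \<noteq> 0\<close> by (simp_all add: zero_less_divide_iff divide_less_eq)
  show ?thesis
  proof (rule that)
    show "1 \<le> int k" "0 \<le> q" "q \<le> int k - 1"
      using \<open>k \<noteq> 0\<close> \<open>0 < i\<close> \<open>i < 2 * int k\<close> q by auto
    show "\<alpha> = (2 * of_int q + 1) / (2 * of_int (int k))"
      using \<alpha> q by simp
  qed
qed

lemma corner_derivatives_vanish:
  assumes "open S" "smooth_on S u" "\<forall>p\<in>S. - laplacian u p = lam * u p" "x0 \<in> S" "h > 0"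
    and "segment_from x0 (dir \<theta>) h \<subseteq> S" "\<forall>p\<in>segment_from x0 (dir \<theta>) h. u p = 0"
    and "segment_from x0 (dir \<phi>) h \<subseteq> S"
    and "\<forall>p\<in>segment_from x0 (dir \<phi>) h. normal_deriv u (dir (\<phi> + pi / 2)) p = 0"
    and "cos (real k * (\<phi> - \<theta>)) \<noteq> 0"
    and "\<And>ds. length ds + 2 = k \<Longrightarrow> iter_partial ds u x0 = 0"
    and "length ds = k"
  shows "iter_partial ds u x0 = 0"
proof -
  obtain \<zeta> where top: "\<And>ds. length ds = k \<Longrightarrow> iter_partial ds u x0 = Re (\<zeta> * \<i> ^ count_list ds True)"
    using helmholtz_top_order_derivatives[OF assms(1-4,11)] by blast
  have nodal: "Re (\<zeta> * cis (real k * \<theta>)) = 0"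
    using nodal_line_top_order[OF assms(1,2,5-7) top] .
  show ?thesis
  proof (cases "k = 0")
    case True
    then show ?thesis
      using nodal top assms(12) by simp
  next
    case False
    then have "Im (\<zeta> * cis (real k * \<phi>)) = 0"
      using singular_line_top_order[OF assms(1,2,5,4) _ assms(8,9) top] by simp
    with nodal have "\<zeta> = 0"
      using assms(10) by (intro complex_eq_0_of_Re_Im_cis) (simp_all add: right_diff_distrib)
    then show ?thesis
      using top assms(12) by simp
  qed
qed

theorem theorem3p7:
  fixes \<Omega> :: "(real \<times> real) set" and u :: "real \<times> real \<Rightarrow> real"
    and lam h \<alpha> \<theta> :: real and x0 :: "real \<times> real" and n :: nat
  assumes "open \<Omega>"
    and "lam > 0"
    and "set_integrable lborel \<Omega> (\<lambda>x. (u x)\<^sup>2)"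
    and "real_analytic_on \<Omega> u"
    and "smooth_on \<Omega> u"
    and "\<forall>p\<in>\<Omega>. - laplacian u p = lam * u p"
    and "x0 \<in> \<Omega>" and "h > 0" and "0 < \<alpha>" and "\<alpha> < 1"
    and "segment_from x0 (dir (\<theta> + \<alpha> * pi)) h \<subseteq> \<Omega>"
    and "segment_from x0 (dir \<theta>) h \<subseteq> \<Omega>"
    and "\<forall>p\<in>segment_from x0 (dir (\<theta> + \<alpha> * pi)) h.
           normal_deriv u (dir (\<theta> + \<alpha> * pi + pi / 2)) p = 0"
    and "\<forall>p\<in>segment_from x0 (dir \<theta>) h. u p = 0"
    and "n \<ge> 2"
    and "\<forall>p q :: int. 1 \<le> p \<and> p \<le> int n - 1 \<and> 0 \<le> q \<and> q \<le> p - 1 \<longrightarrow>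
           \<alpha> \<noteq> (2 * of_int q + 1) / (2 * of_int p)"
  shows "\<forall>ds. length ds \<le> n - 1 \<longrightarrow> iter_partial ds u x0 = 0"
proof -
  have "iter_partial ds u x0 = 0" if "length ds < n" for ds
    using that
  proof (induction "length ds" arbitrary: ds rule: less_induct)
    case less
    let ?k = "length ds"
    have "cos (real ?k * (\<theta> + \<alpha> * pi - \<theta>)) \<noteq> 0"
    proof
      assume "cos (real ?k * (\<theta> + \<alpha> * pi - \<theta>)) = 0"
      then obtain q :: int where "1 \<le> int ?k" "0 \<le> q" "q \<le> int ?k - 1"
        "\<alpha> = (2 * of_int q + 1) / (2 * of_int (int ?k))"
        using cos_multiple_eq_0_imp_odd_fraction[of ?k \<alpha>] assms(9,10) by (auto simp: mult.assoc)
      with less.prems show False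
        using assms(16)[rule_format, of "int ?k" q] by linarith
    qed
    then show ?case
      using corner_derivatives_vanish[OF assms(1,5,6,7,8,12,14,11,13)] less by force
  qed
  then show ?thesis
    using assms(15) by auto
qed

end
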